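(* Let $A\subseteq\mathbb{R}^n$ be a closed set supporting a doubling measure $\mu$, and let $f\colon A\to\mathbb{R}^m$ be Lipschitz. Then for $\mu$-almost every $a\in A$ the following holds: for all $(\hat A,\hat f)\in\mathrm{Tan}_{\mathbb{R}^n}(A,f,a)$ and all $b\in\hat A$, $$(\hat A-b,\ \hat f(\cdot+b)-\hat f(b))\in\mathrm{Tan}_{\mathbb{R}^n}(A,f,a).$$
   Context: A Radon measure $\mu$ on $A$ (with the Euclidean metric), finite and positive on balls of $A$, is doubling if $\mu(B(x,2r))\le C\mu(B(x,r))$ for all $x\in A$, $r>0$. For $A,B\subseteq\mathbb{R}^n$ and $R>0$, $d_R(A,B)=\max\{\sup_{a\in A\cap B(0,R)}\mathrm{dist}(a,B),\ \sup_{b\in B\cap B(0,R)}\mathrm{dist}(b,A)\}$; sets $A_j$ converge in the pointed Hausdorff sense to a closed set $\hat A$ if $d_R(A_j,\hat A)\to0$ for all $R>0$. For Lipschitz $f\colon A\to\mathbb{R}^m$ and $a\in A$, the pair $(\hat A,\hat f)$ is an intrinsic tangent of $(A,f)$ at $a$, written $(\hat A,\hat f)\in\mathrm{Tan}_{\mathbb{R}^n}(A,f,a)$, if there is a sequence $\lambda_j\to0^+$ such that $\lambda_j^{-1}(A-a)\to\hat A$ in the pointed Hausdorff sense and $\hat f\colon\hat A\to\mathbb{R}^m$ satisfies: whenever $x_j\in A$ and $\lambda_j^{-1}(x_j-a)\to x\in\hat A$, then $\lambda_j^{-1}(f(x_j)-f(a))\to\hat f(x)$. *)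

theory Defs
  imports "HOL-Analysis.Analysis"
begin

definition edist_set :: "'a::metric_space \<Rightarrow> 'a set \<Rightarrow> ennreal" where
  "edist_set x S = (if S = {} then \<infinity> else ennreal (infdist x S))"

text \<open>d_R(A,B); suprema over the empty set are 0 (ennreal convention).\<close>
definition dR :: "real \<Rightarrow> 'a::real_normed_vector set \<Rightarrow> 'a set \<Rightarrow> ennreal" where
  "dR R A B = max (SUP a\<in>A \<inter> ball 0 R. edist_set a B) (SUP b\<in>B \<inter> ball 0 R. edist_set b A)"

definition pointed_hausdorff_conv :: "(nat \<Rightarrow> 'a::real_normed_vector set) \<Rightarrow> 'a set \<Rightarrow> bool" where
  "pointed_hausdorff_conv As B \<longleftrightarrow> closed B \<and> (\<forall>R>0. (\<lambda>j. dR R (As j) B) \<longlonglongrightarrow> 0)"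

text \<open>Doubling measure on A: Borel measure on the ambient space concentrated on A
  (this is how a Radon measure on A is represented), finite and positive on balls
  centred in A, with the doubling inequality.\<close>
definition doubling_measure_on :: "'a::euclidean_space set \<Rightarrow> 'a measure \<Rightarrow> bool" where
  "doubling_measure_on A \<mu> \<longleftrightarrow>
     sets \<mu> = sets borel \<and> emeasure \<mu> (UNIV - A) = 0 \<and>
     (\<forall>x\<in>A. \<forall>r>0. 0 < emeasure \<mu> (ball x r) \<and> emeasure \<mu> (ball x r) < \<infinity>) \<and>
     (\<exists>C. \<forall>x\<in>A. \<forall>r>0. emeasure \<mu> (ball x (2*r)) \<le> ennreal C * emeasure \<mu> (ball x r))"

definition intrinsic_tangent ::
  "'a::euclidean_space set \<Rightarrow> ('a \<Rightarrow> 'b::euclidean_space) \<Rightarrow> 'a \<Rightarrow> 'a set \<Rightarrow> ('a \<Rightarrow> 'b) \<Rightarrow> bool" where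
  "intrinsic_tangent A f a Ahat fhat \<longleftrightarrow>
     (\<exists>lam :: nat \<Rightarrow> real. (\<forall>j. lam j > 0) \<and> lam \<longlonglongrightarrow> 0 \<and>
        pointed_hausdorff_conv (\<lambda>j. (\<lambda>y. (1 / lam j) *\<^sub>R (y - a)) ` A) Ahat \<and>
        (\<forall>xs x. (\<forall>j. xs j \<in> A) \<longrightarrow> x \<in> Ahat \<longrightarrow>
            (\<lambda>j. (1 / lam j) *\<^sub>R (xs j - a)) \<longlonglongrightarrow> x \<longrightarrow>
            (\<lambda>j. (1 / lam j) *\<^sub>R (f (xs j) - f a)) \<longlonglongrightarrow> fhat x))"

end

theory Submission
  imports Defs
begin

text \<open>For a finite set \<open>D\<close> from a countable dense set of pairs and \<open>k \<in> \<nat>\<close>, the points of \<open>A\<close>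
  at which no scale \<open>r < 1/(k+1)\<close> sees the rescaled graph of \<open>f\<close> within \<open>1/(k+1)\<close> of \<open>D\<close> form a
  closed set \<open>E\<close>, since \<open>f\<close> is Lipschitz. A doubling measure does not charge the porous points of
  a closed set, so almost every \<open>a\<close> is, for each of these countably many \<open>E\<close>, outside \<open>E\<close> or a
  point where \<open>E\<close> is non-porous at every ratio. At such an \<open>a\<close> take a tangent \<open>(Ahat, fhat)\<close>
  along \<open>lam j\<close>, \<open>b \<in> Ahat\<close>, and \<open>D\<close> a net of the graph of \<open>fhat\<close> around \<open>(b, fhat b)\<close>. If \<open>a \<in> E\<close>,
  pick \<open>y \<in> A\<close> whose rescaled position is near \<open>b\<close>; non-porosity yields \<open>z \<in> E\<close> with \<open>|z - y|\<close>
  much smaller than \<open>lam j\<close>, but the tangent describes the graph at \<open>z\<close> at scale \<open>lam j\<close> by \<open>D\<close>,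
  contradicting \<open>z \<in> E\<close>. So each \<open>k\<close> yields a scale below \<open>1/(k+1)\<close> at which the graph at \<open>a\<close>
  looks like the translated tangent up to \<open>1/(k+1)\<close>.\<close>

lemma infdist_lessD:
  assumes "infdist x S < d" "S \<noteq> {}"
  shows "\<exists>s\<in>S. dist x s < d"
proof -
  have "(INF s\<in>S. dist x s) < d" using assms by (simp add: infdist_notempty)
  then show ?thesis using assms(2) by (subst (asm) cINF_less_iff) (auto intro: bdd_belowI[of _ 0])
qed

lemma edist_set_lessD:
  assumes "edist_set x S < ennreal \<rho>"
  shows "\<exists>s\<in>S. dist x s < \<rho>"
proof -
  have ne: "S \<noteq> {}" using assms by (auto simp: edist_set_def)
  then have "ennreal (infdist x S) < ennreal \<rho>" using assms by (simp add: edist_set_def)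
  then have "infdist x S < \<rho>" by (simp add: ennreal_less_iff[OF infdist_nonneg])
  then show ?thesis using ne by (rule infdist_lessD)
qed

lemma edist_set_le: "s \<in> S \<Longrightarrow> edist_set x S \<le> ennreal (dist x s)"
  by (auto simp: edist_set_def intro!: ennreal_leI infdist_le)

lemma edist_set_le_dR_left: "x \<in> X \<Longrightarrow> norm x < R \<Longrightarrow> edist_set x Y \<le> dR R X Y"
  unfolding dR_def by (rule order_trans[OF _ max.cobounded1]) (rule SUP_upper, auto)

lemma edist_set_le_dR_right: "y \<in> Y \<Longrightarrow> norm y < R \<Longrightarrow> edist_set y X \<le> dR R X Y"
  unfolding dR_def by (rule order_trans[OF _ max.cobounded2]) (rule SUP_upper, auto)

lemma dR_leI:
  "(\<And>x. x \<in> X \<Longrightarrow> norm x < R \<Longrightarrow> edist_set x Y \<le> c) \<Longrightarrow>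
   (\<And>y. y \<in> Y \<Longrightarrow> norm y < R \<Longrightarrow> edist_set y X \<le> c) \<Longrightarrow> dR R X Y \<le> c"
  unfolding dR_def by (auto intro!: SUP_least)

lemma norm_le_sum2: "(u::'a::real_normed_vector) = p + q \<Longrightarrow> norm u \<le> norm p + norm q"
  using norm_triangle_ineq[of p q] by simp

lemma norm_le_sum3: "(u::'a::real_normed_vector) = p + q + s \<Longrightarrow> norm u \<le> norm p + norm q + norm s"
  using norm_triangle_ineq[of "p + q" s] norm_triangle_ineq[of p q] by simp

lemma norm_diff_diff_less:
  fixes p w u c q :: "'a::real_normed_vector"
  assumes "norm (p - u) < \<alpha>" "norm (w - c) < \<beta>" "norm (u - c - q) < \<gamma>"
  shows "norm (p - w - q) < \<alpha> + \<beta> + \<gamma>"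
proof -
  have "norm (p - w - q) \<le> norm (p - u) + norm (c - w) + norm (u - c - q)"
    by (rule norm_le_sum3) simp
  then show ?thesis using assms norm_minus_commute[of c w] by linarith
qed

section \<open>Porous sets are null for doubling measures\<close>

definition nonporous_at :: "'a::metric_space set \<Rightarrow> 'a set \<Rightarrow> real \<Rightarrow> 'a \<Rightarrow> bool" where
  "nonporous_at A E \<eta> a \<longleftrightarrow>
     (\<exists>\<delta>>0. \<forall>r. 0 < r \<longrightarrow> r < \<delta> \<longrightarrow> (\<forall>y\<in>A. dist y a < r \<longrightarrow> ball y (\<eta> * r) \<inter> E \<noteq> {}))"

lemma emeasure_UN_countable_le:
  assumes X[measurable]: "\<And>i. i \<in> I \<Longrightarrow> X i \<in> sets M" and I: "countable I"
  shows "emeasure M (\<Union>(X ` I)) \<le> (\<integral>\<^sup>+i. emeasure M (X i) \<partial>count_space I)"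
proof -
  have "\<Union>(X ` I) \<in> sets M" using X I by (intro sets.countable_UN') auto
  then have "emeasure M (\<Union>(X ` I)) = (\<integral>\<^sup>+x. indicator (\<Union>(X ` I)) x \<partial>M)"
    by simp
  also have "\<dots> \<le> (\<integral>\<^sup>+x. \<integral>\<^sup>+i. indicator (X i) x \<partial>count_space I \<partial>M)"
  proof (intro nn_integral_mono)
    fix x
    show "(indicator (\<Union>(X ` I)) x :: ennreal) \<le> (\<integral>\<^sup>+i. indicator (X i) x \<partial>count_space I)"
    proof (cases "x \<in> \<Union>(X ` I)")
      case True
      then obtain j where j: "j \<in> I" "x \<in> X j" by auto
      have "(\<integral>\<^sup>+i. indicator {j} i * indicator (X i) x \<partial>count_space I)
          = (\<Sum>i\<in>{j}. indicator {j} i * indicator (X i) x :: ennreal)"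
        using j by (intro nn_integral_count_space') auto
      then have "(1::ennreal) = (\<integral>\<^sup>+i. indicator {j} i * indicator (X i) x \<partial>count_space I)"
        using j by simp
      also have "\<dots> \<le> (\<integral>\<^sup>+i. indicator (X i) x \<partial>count_space I)"
        by (intro nn_integral_mono) (auto simp: indicator_def)
      finally show ?thesis using True by simp
    qed simp
  qed
  also have "\<dots> = (\<integral>\<^sup>+i. \<integral>\<^sup>+x. indicator (X i) x \<partial>M \<partial>count_space I)"
    by (rule nn_integral_count_space_nn_integral[OF I]) (auto intro: borel_measurable_indicator)
  also have "\<dots> = (\<integral>\<^sup>+i. emeasure M (X i) \<partial>count_space I)"
    by (intro nn_integral_cong) simp
  finally show ?thesis .
qed

lemma AE_notin_if_small_covers:
  assumes "\<And>\<epsilon>::real. \<epsilon> > 0 \<Longrightarrow> \<exists>V\<in>sets M. S \<subseteq> V \<and> emeasure M V \<le> ennreal \<epsilon>"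
  shows "AE x in M. x \<notin> S"
proof -
  obtain V where V: "\<And>n. V n \<in> sets M" "\<And>n. S \<subseteq> V n" "\<And>n::nat. emeasure M (V n) \<le> ennreal (1 / Suc n)"
    using assms[of "1 / Suc _"] by (metis of_nat_0_less_iff divide_pos_pos zero_less_Suc zero_less_one)
  have Vs: "(\<Inter>n. V n) \<in> sets M" using V(1) by auto
  have "emeasure M (\<Inter>n. V n) \<le> 0"
  proof (rule ennreal_le_epsilon)
    fix e :: real assume "0 < e"
    then obtain n where n: "1 / real (Suc n) < e" by (metis nat_approx_posE)
    have "emeasure M (\<Inter>n. V n) \<le> emeasure M (V n)" using V(1) by (intro emeasure_mono) auto
    also have "\<dots> \<le> ennreal e" using V(3)[of n] n by (meson ennreal_leI less_imp_le order_trans)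
    finally show "emeasure M (\<Inter>n. V n) \<le> 0 + ennreal e" by simp
  qed
  then have "(\<Inter>n. V n) \<in> null_sets M" using Vs by auto
  moreover have "{x \<in> space M. \<not> x \<notin> S} \<subseteq> (\<Inter>n. V n)" using V(2) by blast
  ultimately show ?thesis by (rule AE_I')
qed

lemma emeasure_thickening_diff_tendsto_0:
  fixes E B :: "'a::metric_space set"
  assumes sets: "sets \<mu> = sets borel" and "closed E" "E \<noteq> {}" "open B" "emeasure \<mu> B < \<infinity>"
  shows "(\<lambda>k. emeasure \<mu> ({x. infdist x E < 1 / Suc k} \<inter> B - E)) \<longlonglongrightarrow> 0"
proof -
  define W where "W k = {x. infdist x E < 1 / Suc k} \<inter> B - E" for k :: nat
  have W_sets: "W k \<in> sets \<mu>" for k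
  proof -
    have "open {x. infdist x E < 1 / Suc k}" by (intro open_Collect_less continuous_intros)
    then show ?thesis using assms unfolding W_def sets by auto
  qed
  have "decseq W"
    unfolding decseq_def W_def by (auto simp: frac_le elim!: less_le_trans)
  moreover have "emeasure \<mu> (W k) \<noteq> \<infinity>" for k
  proof -
    have "emeasure \<mu> (W k) \<le> emeasure \<mu> B"
      using assms by (intro emeasure_mono) (auto simp: W_def sets)
    then show ?thesis using assms by (auto simp: top.not_eq_extremum)
  qed
  moreover have "(\<Inter>k. W k) = {}"
  proof (rule ccontr)
    assume "(\<Inter>k. W k) \<noteq> {}"
    then obtain x where x: "\<And>k. x \<in> W k" by auto
    have "infdist x E \<le> 0"
    proof (rule field_le_epsilon)
      fix e :: real assume "e > 0"
      then obtain k where "1 / real (Suc k) < e" by (metis nat_approx_posE)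
      then show "infdist x E \<le> 0 + e" using x[of k] by (auto simp: W_def)
    qed
    then have "x \<in> E" using infdist_nonneg[of x E] in_closed_iff_infdist_zero[OF assms(2,3)] by simp
    then show False using x[of 0] by (simp add: W_def)
  qed
  ultimately have "(\<lambda>k. emeasure \<mu> (W k)) \<longlonglongrightarrow> emeasure \<mu> (\<Inter>k. W k)"
    using W_sets by (intro Lim_emeasure_decseq) auto
  then have "(\<lambda>k. emeasure \<mu> (W k)) \<longlonglongrightarrow> 0" using \<open>(\<Inter>k. W k) = {}\<close> by simp
  then show ?thesis by (simp add: W_def)
qed

lemma emeasure_ball_le_doubling_pow:
  assumes C: "\<forall>x\<in>A. \<forall>r>0. emeasure \<mu> (ball x (2 * r)) \<le> ennreal C * emeasure \<mu> (ball x r)"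
    and x: "x \<in> A" and s: "s > 0"
  shows "emeasure \<mu> (ball x (2 ^ m * s)) \<le> ennreal C ^ m * emeasure \<mu> (ball x s)"
proof (induction m)
  case (Suc m)
  have "emeasure \<mu> (ball x (2 ^ Suc m * s)) = emeasure \<mu> (ball x (2 * (2 ^ m * s)))"
    by (simp add: mult.assoc)
  also have "\<dots> \<le> ennreal C * emeasure \<mu> (ball x (2 ^ m * s))" using C x s by simp
  also have "\<dots> \<le> ennreal C * (ennreal C ^ m * emeasure \<mu> (ball x s))"
    by (intro mult_left_mono Suc.IH) auto
  finally show ?case by (simp add: mult.assoc)
qed simp

lemma emeasure_ball_le_doubling_pow_offcentre:
  assumes C: "\<forall>x\<in>A. \<forall>r>0. emeasure \<mu> (ball x (2 * r)) \<le> ennreal C * emeasure \<mu> (ball x r)"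
    and sets: "sets \<mu> = sets borel"
    and y: "y \<in> A" "dist y x < r" and \<eta>: "\<eta> > 0" and m: "11 < 2 ^ m * \<eta>"
  shows "emeasure \<mu> (ball x (10 * r)) \<le> ennreal C ^ m * emeasure \<mu> (ball y (\<eta> * r))"
proof -
  have r: "r > 0" using y(2) zero_le_dist[of y x] by linarith
  have "ball x (10 * r) \<subseteq> ball y (2 ^ m * (\<eta> * r))"
  proof
    fix z assume "z \<in> ball x (10 * r)"
    moreover have "11 * r < 2 ^ m * (\<eta> * r)" using m r by (simp add: mult.assoc[symmetric])
    ultimately show "z \<in> ball y (2 ^ m * (\<eta> * r))"
      using dist_triangle[of y z x] y(2) by simp
  qed
  then have "emeasure \<mu> (ball x (10 * r)) \<le> emeasure \<mu> (ball y (2 ^ m * (\<eta> * r)))"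
    by (intro emeasure_mono) (auto simp: sets)
  also have "\<dots> \<le> ennreal C ^ m * emeasure \<mu> (ball y (\<eta> * r))"
    using emeasure_ball_le_doubling_pow[OF C y(1)] r \<eta> by simp
  finally show ?thesis .
qed

lemma ball_subset_ball_offcentre:
  assumes "dist y x < r" "\<eta> \<le> 1"
  shows "ball y (\<eta> * r) \<subseteq> ball x (2 * r)"
proof
  fix z assume "z \<in> ball y (\<eta> * r)"
  moreover have "0 \<le> r" using assms(1) zero_le_dist[of y x] by linarith
  then have "\<eta> * r \<le> r" using mult_right_mono[OF assms(2)] by simp
  ultimately have "dist x z < 2 * r" using assms(1) dist_triangle[of x z y] by (simp add: dist_commute)
  then show "z \<in> ball x (2 * r)" by simp
qed

lemma emeasure_cover_le_doubling_holes:
  fixes A K W :: "'a::euclidean_space set"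
  assumes C: "\<forall>x\<in>A. \<forall>r>0. emeasure \<mu> (ball x (2 * r)) \<le> ennreal C * emeasure \<mu> (ball x r)"
    and sets: "sets \<mu> = sets borel" and \<eta>: "0 < \<eta>" "\<eta> \<le> 1" and m: "11 < 2 ^ m * \<eta>"
    and holes: "\<And>a. a \<in> K \<Longrightarrow>
       0 < rr a \<and> rr a \<le> 1/2 \<and> yy a \<in> A \<and> dist (yy a) a < rr a \<and> ball (yy a) (\<eta> * rr a) \<subseteq> W"
    and W: "W \<in> sets \<mu>"
  shows "\<exists>V\<in>sets \<mu>. K \<subseteq> V \<and> emeasure \<mu> V \<le> ennreal C ^ m * emeasure \<mu> W"
proof -
  have "K \<subseteq> (\<Union>a\<in>K. ball (id a) (2 * rr a))" using holes by fastforce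
  moreover have "\<And>a. a \<in> K \<Longrightarrow> 0 < 2 * rr a \<and> 2 * rr a \<le> 1" using holes by force
  ultimately obtain Cc where Cc: "countable Cc" "Cc \<subseteq> K"
      "pairwise (\<lambda>i j. disjnt (ball (id i) (2 * rr i)) (ball (id j) (2 * rr j))) Cc"
      "K \<subseteq> (\<Union>i\<in>Cc. ball (id i) (5 * (2 * rr i)))"
    by (rule Vitali_covering_lemma_balls)
  define V where "V = (\<Union>i\<in>Cc. ball i (10 * rr i))"
  define H where "H i = ball (yy i) (\<eta> * rr i)" for i
  have H_ball: "H i \<subseteq> ball i (2 * rr i)" if "i \<in> Cc" for i
    unfolding H_def using that Cc(2) holes[of i] \<eta>(2) by (intro ball_subset_ball_offcentre) auto
  have "disjoint_family_on H Cc"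
    unfolding disjoint_family_on_def
  proof (intro ballI impI)
    fix i j assume ij: "i \<in> Cc" "j \<in> Cc" "i \<noteq> j"
    then have "disjnt (ball i (2 * rr i)) (ball j (2 * rr j))" using Cc(3) by (auto simp: pairwise_def)
    with H_ball[OF ij(1)] H_ball[OF ij(2)] show "H i \<inter> H j = {}" by (auto simp: disjnt_def)
  qed
  have "emeasure \<mu> V \<le> (\<integral>\<^sup>+i. emeasure \<mu> (ball i (10 * rr i)) \<partial>count_space Cc)"
    unfolding V_def by (intro emeasure_UN_countable_le Cc(1)) (auto simp: sets)
  also have "\<dots> \<le> (\<integral>\<^sup>+i. ennreal C ^ m * emeasure \<mu> (H i) \<partial>count_space Cc)"
    using Cc(2) holes \<eta> m unfolding H_def
    by (intro nn_integral_mono emeasure_ball_le_doubling_pow_offcentre[OF C sets]) auto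
  also have "\<dots> = ennreal C ^ m * (\<integral>\<^sup>+i. emeasure \<mu> (H i) \<partial>count_space Cc)"
    by (rule nn_integral_cmult) auto
  also have "(\<integral>\<^sup>+i. emeasure \<mu> (H i) \<partial>count_space Cc) = emeasure \<mu> (\<Union>(H ` Cc))"
    using \<open>disjoint_family_on H Cc\<close> Cc(1)
    by (intro emeasure_UN_countable[symmetric]) (auto simp: H_def[abs_def] sets)
  also have "emeasure \<mu> (\<Union>(H ` Cc)) \<le> emeasure \<mu> W"
    using Cc(2) holes W by (intro emeasure_mono) (auto simp: H_def)
  finally have "emeasure \<mu> V \<le> ennreal C ^ m * emeasure \<mu> W" by (auto simp: mult_left_mono)
  moreover have "K \<subseteq> V" using Cc(4) by (simp add: V_def)
  moreover have "V \<in> sets \<mu>" unfolding V_def sets by (intro borel_open) auto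
  ultimately show ?thesis by blast
qed

lemma emeasure_ball_finite:
  assumes "doubling_measure_on A \<mu>" "A \<noteq> {}"
  shows "emeasure \<mu> (ball c R) < \<infinity>"
proof -
  obtain a0 where a0: "a0 \<in> A" using assms(2) by auto
  have "ball c R \<subseteq> ball a0 (\<bar>R\<bar> + 1 + dist a0 c)"
  proof
    fix t assume "t \<in> ball c R"
    then show "t \<in> ball a0 (\<bar>R\<bar> + 1 + dist a0 c)" using dist_triangle[of a0 t c] by simp
  qed
  then have "emeasure \<mu> (ball c R) \<le> emeasure \<mu> (ball a0 (\<bar>R\<bar> + 1 + dist a0 c))"
    using assms(1) by (intro emeasure_mono) (auto simp: doubling_measure_on_def)
  also have "\<dots> < \<infinity>"
    using assms(1) a0 unfolding doubling_measure_on_def by (simp add: add_pos_nonneg)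
  finally show ?thesis .
qed

lemma porous_points_small_cover:
  fixes A E :: "'a::euclidean_space set"
  assumes dm: "doubling_measure_on A \<mu>" and E: "closed E" "E \<subseteq> A"
    and \<eta>: "0 < \<eta>" "\<eta> \<le> 1" and \<epsilon>: "\<epsilon> > 0"
  shows "\<exists>V\<in>sets \<mu>. {a\<in>E. \<not> nonporous_at A E \<eta> a} \<inter> ball 0 R \<subseteq> V \<and> emeasure \<mu> V \<le> ennreal \<epsilon>"
proof (cases "E = {}")
  case False
  have sets: "sets \<mu> = sets borel" using dm unfolding doubling_measure_on_def by auto
  obtain C where C: "\<forall>x\<in>A. \<forall>r>0. emeasure \<mu> (ball x (2 * r)) \<le> ennreal C * emeasure \<mu> (ball x r)"
    using dm unfolding doubling_measure_on_def by auto
  define B0 where "B0 = ball (0::'a) (\<bar>R\<bar> + 1)"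
  have "emeasure \<mu> B0 < \<infinity>"
    unfolding B0_def using False E(2) by (intro emeasure_ball_finite[OF dm]) auto
  define W where "W k = {x. infdist x E < 1 / Suc k} \<inter> B0 - E" for k :: nat
  obtain m :: nat where m: "11 / \<eta> < 2 ^ m" using real_arch_pow[of 2 "11 / \<eta>"] by auto
  define M where "M = ennreal C ^ m"
  have "M < \<infinity>" unfolding M_def by (simp add: power_less_top_ennreal)
  have "(\<lambda>k. M * emeasure \<mu> (W k)) \<longlonglongrightarrow> M * 0"
    unfolding W_def using emeasure_thickening_diff_tendsto_0[OF sets E(1) False _ \<open>emeasure \<mu> B0 < \<infinity>\<close>]
      \<open>M < \<infinity>\<close> by (intro ennreal_tendsto_cmult) (auto simp: B0_def)
  then obtain k where k: "M * emeasure \<mu> (W k) < ennreal \<epsilon>"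
    using \<epsilon> by (fastforce dest!: order_tendstoD(2)[of _ _ _ "ennreal \<epsilon>"] simp: eventually_sequentially)
  define \<delta> where "\<delta> = min (1 / (2 * Suc k)) (1 / 4)"
  define K where "K = {a\<in>E. \<not> nonporous_at A E \<eta> a} \<inter> ball 0 R"
  have "\<forall>a\<in>K. \<exists>r. 0 < r \<and> r < \<delta> \<and> (\<exists>y\<in>A. dist y a < r \<and> ball y (\<eta> * r) \<inter> E = {})"
  proof
    fix a assume "a \<in> K"
    moreover have "\<delta> > 0" by (simp add: \<delta>_def)
    ultimately show "\<exists>r. 0 < r \<and> r < \<delta> \<and> (\<exists>y\<in>A. dist y a < r \<and> ball y (\<eta> * r) \<inter> E = {})"
      unfolding K_def nonporous_at_def by blast
  qed
  then obtain rr yy where ry: "\<And>a. a \<in> K \<Longrightarrow>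
      0 < rr a \<and> rr a < \<delta> \<and> yy a \<in> A \<and> dist (yy a) a < rr a \<and> ball (yy a) (\<eta> * rr a) \<inter> E = {}"
    by metis
  have hole_W: "ball (yy i) (\<eta> * rr i) \<subseteq> W k" if iK: "i \<in> K" for i
  proof
    fix z assume z: "z \<in> ball (yy i) (\<eta> * rr i)"
    have iE: "i \<in> E" and iR: "norm i < R" using iK by (auto simp: K_def)
    have dz: "dist i z < 2 * rr i" using ball_subset_ball_offcentre[of "yy i" i "rr i" \<eta>] ry[OF iK] \<eta> z by auto
    have rr: "2 * rr i \<le> 1 / Suc k" "2 * rr i \<le> 1" using ry[OF iK] by (auto simp: \<delta>_def field_simps)
    have "infdist z E \<le> dist z i" using iE by (rule infdist_le)
    then have "infdist z E < 1 / Suc k" using dz rr by (simp add: dist_commute)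
    moreover have "norm z < \<bar>R\<bar> + 1"
      using norm_triangle_sub[of z i] iR dz rr by (simp add: dist_norm norm_minus_commute)
    moreover have "z \<notin> E" using ry[OF iK] z by auto
    ultimately show "z \<in> W k" by (simp add: W_def B0_def)
  qed
  have "W k \<in> sets \<mu>" unfolding W_def B0_def sets
    by (intro sets.Diff sets.Int borel_open borel_closed E(1) open_ball open_Collect_less
        continuous_on_infdist continuous_on_const continuous_on_id)
  moreover have "11 < 2 ^ m * \<eta>" using m \<eta> by (simp add: field_simps)
  ultimately have "\<exists>V\<in>sets \<mu>. K \<subseteq> V \<and> emeasure \<mu> V \<le> M * emeasure \<mu> (W k)"
    unfolding M_def
  proof (intro emeasure_cover_le_doubling_holes[OF C sets \<eta>])
    fix a assume "a \<in> K"
    then show "0 < rr a \<and> rr a \<le> 1/2 \<and> yy a \<in> A \<and> dist (yy a) a < rr a \<and> ball (yy a) (\<eta> * rr a) \<subseteq> W k"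
      using ry[of a] hole_W[of a] by (simp add: \<delta>_def)
  qed
  then show ?thesis using k unfolding K_def by (meson less_imp_le order_trans)
qed (auto intro: bexI[of _ "{}"])

lemma AE_nonporous:
  fixes A E :: "'a::euclidean_space set"
  assumes "doubling_measure_on A \<mu>" "closed E" "E \<subseteq> A" "0 < \<eta>" "\<eta> \<le> 1"
  shows "AE a in \<mu>. a \<in> E \<longrightarrow> nonporous_at A E \<eta> a"
proof -
  have "AE a in \<mu>. a \<notin> {a\<in>E. \<not> nonporous_at A E \<eta> a} \<inter> ball 0 (real N)" for N
    using porous_points_small_cover[OF assms] by (intro AE_notin_if_small_covers)
  then have "AE a in \<mu>. \<forall>N::nat. a \<notin> {a\<in>E. \<not> nonporous_at A E \<eta> a} \<inter> ball 0 (real N)"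
    by (subst AE_all_countable) blast
  then show ?thesis
  proof (rule eventually_mono)
    fix a assume "\<forall>N::nat. a \<notin> {a\<in>E. \<not> nonporous_at A E \<eta> a} \<inter> ball 0 (real N)"
    moreover obtain N :: nat where "norm a < real N" using reals_Archimedean2 by blast
    ultimately show "a \<in> E \<longrightarrow> nonporous_at A E \<eta> a" by auto
  qed
qed

section \<open>Rescaled graphs near finite sets\<close>

text \<open>Within radius \<open>R\<close>, the graph of \<open>f\<close> rescaled at \<open>a\<close> by \<open>1/r\<close> and \<open>D\<close> are \<open>e\<close>-close in both
  directions; the margin \<open>\<theta>\<close> makes this an open condition in \<open>a\<close>.\<close>

definition scaled_graph_near ::
  "'a::real_normed_vector set \<Rightarrow> ('a \<Rightarrow> 'b::real_normed_vector) \<Rightarrow> 'a \<Rightarrow> real \<Rightarrow> ('a \<times> 'b) set \<Rightarrow> real \<Rightarrow> real \<Rightarrow> bool"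
  where
  "scaled_graph_near A f a r D e R \<longleftrightarrow> (\<exists>\<theta>>0.
     (\<forall>x\<in>A. norm (x - a) \<le> (R + \<theta>) * r \<longrightarrow>
        (\<exists>qv\<in>D. norm ((1/r) *\<^sub>R (x - a) - fst qv) < e - \<theta> \<and> norm ((1/r) *\<^sub>R (f x - f a) - snd qv) < e - \<theta>)) \<and>
     (\<forall>qv\<in>D. \<exists>x\<in>A. norm ((1/r) *\<^sub>R (x - a) - fst qv) < e - \<theta> \<and> norm ((1/r) *\<^sub>R (f x - f a) - snd qv) < e - \<theta>))"

definition graph_far_set ::
  "'a::real_normed_vector set \<Rightarrow> ('a \<Rightarrow> 'b::real_normed_vector) \<Rightarrow> ('a \<times> 'b) set \<Rightarrow> real \<Rightarrow> real \<Rightarrow> real \<Rightarrow> 'a set"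
  where "graph_far_set A f D e R \<delta> = {a\<in>A. \<forall>r. 0 < r \<longrightarrow> r < \<delta> \<longrightarrow> \<not> scaled_graph_near A f a r D e R}"

lemma norm_scaleR_diff_rebase_le:
  fixes x a a' q :: "'a::real_normed_vector"
  assumes "r > 0"
  shows "norm ((1/r) *\<^sub>R (x - a') - q) \<le> norm ((1/r) *\<^sub>R (x - a) - q) + norm (a - a') / r"
proof -
  have "(1/r) *\<^sub>R (x - a') - q = ((1/r) *\<^sub>R (x - a) - q) + (1/r) *\<^sub>R (a - a')"
    by (simp add: algebra_simps)
  then show ?thesis using assms norm_le_sum2 by fastforce
qed

lemma scaled_graph_near_nearby_base:
  assumes lip: "L-lipschitz_on A f" and aA: "a \<in> A" and r: "r > 0"
    and near: "scaled_graph_near A f a r D e R"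
  shows "\<exists>\<rho>>0. \<forall>a'\<in>A. dist a' a < \<rho> \<longrightarrow> scaled_graph_near A f a' r D e R"
proof -
  obtain \<theta> where th: "\<theta> > 0" and near1: "\<forall>x\<in>A. norm (x - a) \<le> (R + \<theta>) * r \<longrightarrow>
        (\<exists>qv\<in>D. norm ((1/r) *\<^sub>R (x - a) - fst qv) < e - \<theta> \<and> norm ((1/r) *\<^sub>R (f x - f a) - snd qv) < e - \<theta>)"
    and near2: "\<forall>qv\<in>D. \<exists>x\<in>A. norm ((1/r) *\<^sub>R (x - a) - fst qv) < e - \<theta> \<and> norm ((1/r) *\<^sub>R (f x - f a) - snd qv) < e - \<theta>"
    using near unfolding scaled_graph_near_def by blast
  have L0: "L \<ge> 0" using lip lipschitz_on_nonneg by blast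
  define \<rho> where "\<rho> = \<theta> * r / (2 * (L + 1))"
  have \<rho>: "\<rho> > 0" "\<rho> \<le> \<theta> * r / 2" "L * \<rho> \<le> \<theta> * r / 2"
    using th r L0 by (auto simp: \<rho>_def field_simps)
  show ?thesis
  proof (intro exI[of _ \<rho>] conjI \<rho>(1) ballI impI)
    fix a' assume a'A: "a' \<in> A" and "dist a' a < \<rho>"
    then have daa: "norm (a - a') < \<rho>" by (simp add: dist_norm norm_minus_commute)
    have S: "norm (a - a') / r \<le> \<theta>/2" using daa \<rho> r by (simp add: field_simps)
    have "norm (f a - f a') \<le> L * norm (a - a')"
      using lipschitz_onD[OF lip aA a'A] by (simp add: dist_norm)
    also have "\<dots> \<le> L * \<rho>" using daa L0 by (intro mult_left_mono) auto
    finally have F: "norm (f a - f a') / r \<le> \<theta>/2" using \<rho> r by (simp add: field_simps)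
    show "scaled_graph_near A f a' r D e R"
      unfolding scaled_graph_near_def
    proof (intro exI[of _ "\<theta>/2"] conjI ballI impI)
      fix x assume xA: "x \<in> A" and nx: "norm (x - a') \<le> (R + \<theta>/2) * r"
      have "norm (x - a) \<le> norm (x - a') + norm (a' - a)" by (rule norm_diff_triangle_le) auto
      also have "\<dots> \<le> (R + \<theta>) * r" using nx daa \<rho> by (simp add: norm_minus_commute algebra_simps)
      finally obtain qv where qv: "qv \<in> D" "norm ((1/r) *\<^sub>R (x - a) - fst qv) < e - \<theta>"
          "norm ((1/r) *\<^sub>R (f x - f a) - snd qv) < e - \<theta>" using near1 xA by blast
      show "\<exists>qv\<in>D. norm ((1/r) *\<^sub>R (x - a') - fst qv) < e - \<theta>/2 \<and> norm ((1/r) *\<^sub>R (f x - f a') - snd qv) < e - \<theta>/2"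
        using qv norm_scaleR_diff_rebase_le[OF r, of x a' "fst qv" a]
          norm_scaleR_diff_rebase_le[OF r, of "f x" "f a'" "snd qv" "f a"] S F by (intro bexI[OF _ qv(1)]) linarith
    next
      fix qv assume "qv \<in> D"
      then obtain x where x: "x \<in> A" "norm ((1/r) *\<^sub>R (x - a) - fst qv) < e - \<theta>"
          "norm ((1/r) *\<^sub>R (f x - f a) - snd qv) < e - \<theta>" using near2 by blast
      show "\<exists>x\<in>A. norm ((1/r) *\<^sub>R (x - a') - fst qv) < e - \<theta>/2 \<and> norm ((1/r) *\<^sub>R (f x - f a') - snd qv) < e - \<theta>/2"
        using x norm_scaleR_diff_rebase_le[OF r, of x a' "fst qv" a]
          norm_scaleR_diff_rebase_le[OF r, of "f x" "f a'" "snd qv" "f a"] S F by (intro bexI[OF _ x(1)]) linarith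
    qed (use th in simp)
  qed
qed

lemma closed_graph_far_set:
  assumes "closed A" and lip: "L-lipschitz_on A f"
  shows "closed (graph_far_set A f D e R \<delta>)"
  unfolding closed_def open_dist
proof (intro ballI)
  fix x assume "x \<in> - graph_far_set A f D e R \<delta>"
  then consider "x \<notin> A" | r where "x \<in> A" "0 < r" "r < \<delta>" "scaled_graph_near A f x r D e R"
    unfolding graph_far_set_def by blast
  then show "\<exists>\<epsilon>>0. \<forall>y. dist y x < \<epsilon> \<longrightarrow> y \<in> - graph_far_set A f D e R \<delta>"
  proof cases
    case 1
    with \<open>closed A\<close> obtain \<epsilon> where "\<epsilon> > 0" "\<forall>y. dist y x < \<epsilon> \<longrightarrow> y \<in> -A"
      unfolding closed_def open_dist by blast
    then show ?thesis unfolding graph_far_set_def by blast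
  next
    case 2
    then show ?thesis
      using scaled_graph_near_nearby_base[OF lip 2(1,2,4)] unfolding graph_far_set_def by blast
  qed
qed

definition shifted_graph_net ::
  "('a::real_normed_vector \<Rightarrow> 'b::real_normed_vector) \<Rightarrow> 'a set \<Rightarrow> 'a \<Rightarrow> ('a \<times> 'b) set \<Rightarrow> real \<Rightarrow> real \<Rightarrow> bool"
  where
  "shifted_graph_net g S b D \<epsilon> R \<longleftrightarrow> finite D \<and>
     (\<forall>qv\<in>D. \<exists>u\<in>S. norm (u - b - fst qv) < \<epsilon> \<and> norm (g u - g b - snd qv) < \<epsilon>) \<and>
     (\<forall>u\<in>S. norm (u - b) \<le> R \<longrightarrow> (\<exists>qv\<in>D. norm (u - b - fst qv) < \<epsilon> \<and> norm (g u - g b - snd qv) < \<epsilon>))"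

lemma shifted_graph_net_exists:
  fixes g :: "'a::euclidean_space \<Rightarrow> 'b::real_normed_vector"
  assumes "closed S" and lip: "L-lipschitz_on S g" and \<epsilon>: "\<epsilon> > 0"
    and Q: "\<And>X. open X \<Longrightarrow> X \<noteq> {} \<Longrightarrow> \<exists>d\<in>Q. d \<in> X"
  shows "\<exists>D\<subseteq>Q. shifted_graph_net g S b D \<epsilon> R"
proof -
  have L: "L \<ge> 0" using lip lipschitz_on_nonneg by blast
  define \<rho> where "\<rho> = \<epsilon> / (2 * (L + 1))"
  have "(L + 1) * \<rho> = \<epsilon> / 2" using L by (simp add: \<rho>_def field_simps)
  moreover have "\<rho> > 0" "2 * \<rho> \<le> \<epsilon>" using \<epsilon> L by (auto simp: \<rho>_def field_simps)
  ultimately have \<rho>: "\<rho> > 0" "\<rho> < \<epsilon>" "2 * \<rho> \<le> \<epsilon>" "L * \<rho> + \<rho> < \<epsilon>"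
    using \<epsilon> by (auto simp: algebra_simps)
  define K where "K = S \<inter> cball b R"
  have "compact K" unfolding K_def using \<open>closed S\<close> by (intro closed_Int_compact) auto
  then obtain N where N: "finite N" "N \<subseteq> K" "K \<subseteq> (\<Union>z\<in>N. ball z \<rho>)"
    using compactE_image[of K K "\<lambda>z. ball z \<rho>"] \<rho>(1) by force
  have "\<forall>z\<in>N. \<exists>qv\<in>Q. qv \<in> ball (z - b, g z - g b) \<rho>"
    using Q[OF open_ball] \<rho>(1) by (metis centre_in_ball empty_iff)
  then obtain qf where qf: "\<And>z. z \<in> N \<Longrightarrow> qf z \<in> Q \<and> dist (qf z) (z - b, g z - g b) < \<rho>"
    by (metis dist_commute mem_ball)
  have qf_fst: "norm (z - b - fst (qf z)) < \<rho>" and qf_snd: "norm (g z - g b - snd (qf z)) < \<rho>"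
    if "z \<in> N" for z
    using qf[OF that] dist_fst_le[of "qf z" "(z - b, g z - g b)"] dist_snd_le[of "qf z" "(z - b, g z - g b)"]
    by (auto simp: dist_norm norm_minus_commute)
  define D where "D = qf ` N"
  have "shifted_graph_net g S b D \<epsilon> R"
    unfolding shifted_graph_net_def
  proof (intro conjI ballI impI)
    show "finite D" using N by (simp add: D_def)
  next
    fix qv assume "qv \<in> D"
    then obtain z where z: "z \<in> N" "qv = qf z" by (auto simp: D_def)
    then have "z \<in> S" using N(2) by (auto simp: K_def)
    then show "\<exists>u\<in>S. norm (u - b - fst qv) < \<epsilon> \<and> norm (g u - g b - snd qv) < \<epsilon>"
      using qf_fst[OF z(1)] qf_snd[OF z(1)] \<rho>(2) z(2) by force
  next
    fix u assume "u \<in> S" "norm (u - b) \<le> R"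
    then have "u \<in> K" by (simp add: K_def dist_norm norm_minus_commute)
    then obtain z where z: "z \<in> N" "norm (u - z) < \<rho>" using N(3) by (auto simp: dist_norm norm_minus_commute)
    have "norm (u - b - fst (qf z)) \<le> norm (u - z) + norm (z - b - fst (qf z))"
      by (rule norm_le_sum2) simp
    then have "norm (u - b - fst (qf z)) < \<epsilon>" using z qf_fst[OF z(1)] \<rho> by linarith
    moreover have "norm (g u - g b - snd (qf z)) \<le> norm (g u - g z) + norm (g z - g b - snd (qf z))"
      by (rule norm_le_sum2) simp
    moreover have "norm (g u - g z) \<le> L * \<rho>"
    proof -
      have "z \<in> S" using N(2) z(1) by (auto simp: K_def)
      then have "norm (g u - g z) \<le> L * norm (u - z)"
        using lipschitz_onD[OF lip \<open>u \<in> S\<close>] by (simp add: dist_norm)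
      also have "\<dots> \<le> L * \<rho>" using z(2) L by (intro mult_left_mono) auto
      finally show ?thesis .
    qed
    ultimately show "\<exists>qv\<in>D. norm (u - b - fst qv) < \<epsilon> \<and> norm (g u - g b - snd qv) < \<epsilon>"
      using z(1) qf_snd[OF z(1)] \<rho> by (auto simp: D_def)
  qed
  moreover have "D \<subseteq> Q" using qf by (auto simp: D_def)
  ultimately show ?thesis by blast
qed

section \<open>Blow-ups along a tangent sequence\<close>

locale tangent_sequence =
  fixes A :: "'a::euclidean_space set" and f :: "'a \<Rightarrow> 'b::euclidean_space" and a :: 'a and L :: real
    and lam :: "nat \<Rightarrow> real" and Ahat :: "'a set" and fhat :: "'a \<Rightarrow> 'b"
  assumes base_in: "a \<in> A" and lipschitz: "L-lipschitz_on A f"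
    and lam_pos: "\<And>j. lam j > 0" and lam_tendsto_0: "lam \<longlonglongrightarrow> 0"
    and sets_converge: "pointed_hausdorff_conv (\<lambda>j. (\<lambda>y. (1 / lam j) *\<^sub>R (y - a)) ` A) Ahat"
    and values_converge: "\<And>xs x. (\<forall>j. xs j \<in> A) \<Longrightarrow> x \<in> Ahat \<Longrightarrow>
          (\<lambda>j. (1 / lam j) *\<^sub>R (xs j - a)) \<longlonglongrightarrow> x \<Longrightarrow>
          (\<lambda>j. (1 / lam j) *\<^sub>R (f (xs j) - f a)) \<longlonglongrightarrow> fhat x"
begin

definition S where "S j x = (1 / lam j) *\<^sub>R (x - a)"
definition F where "F j x = (1 / lam j) *\<^sub>R (f x - f a)"

lemma lipschitz_const_nonneg: "0 \<le> L"
  using lipschitz lipschitz_on_nonneg by blast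

lemma closed_tangent_set: "closed Ahat"
  using sets_converge by (simp add: pointed_hausdorff_conv_def)

lemma norm_S: "norm (S j x) = norm (x - a) / lam j"
  using lam_pos[of j] by (simp add: S_def)

lemma S_diff: "S j x - S j z = (1 / lam j) *\<^sub>R (x - z)"
  by (simp add: S_def algebra_simps)

lemma F_diff: "F j x - F j z = (1 / lam j) *\<^sub>R (f x - f z)"
  by (simp add: F_def algebra_simps)

lemma norm_F_diff_le:
  assumes "y \<in> A" "y' \<in> A"
  shows "norm (F j y - F j y') \<le> L * norm (S j y - S j y')"
proof -
  have "norm (F j y - F j y') = norm (f y - f y') / lam j" using lam_pos[of j] by (simp add: F_diff)
  also have "\<dots> \<le> L * norm (y - y') / lam j"
    using lipschitz_onD[OF lipschitz assms] lam_pos[of j] by (intro divide_right_mono) (auto simp: dist_norm)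
  also have "\<dots> = L * norm (S j y - S j y')" using lam_pos[of j] by (simp add: S_diff)
  finally show ?thesis .
qed

lemma eventually_dR_less:
  assumes "R > 0" "\<rho> > 0"
  shows "eventually (\<lambda>j. dR R (S j ` A) Ahat < ennreal \<rho>) sequentially"
proof -
  have "(\<lambda>j. dR R (S j ` A) Ahat) \<longlonglongrightarrow> 0"
    using sets_converge assms(1) by (simp add: pointed_hausdorff_conv_def S_def[abs_def])
  then show ?thesis using assms(2) by (intro order_tendstoD(2)) auto
qed

lemma eventually_infdist_less:
  assumes "x \<in> Ahat" "\<rho> > 0"
  shows "eventually (\<lambda>j. infdist x (S j ` A) < \<rho>) sequentially"
proof -
  have "norm x + 1 > 0" by (simp add: add_nonneg_pos)
  from eventually_dR_less[OF this assms(2)] show ?thesis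
  proof (rule eventually_mono)
    fix j assume "dR (norm x + 1) (S j ` A) Ahat < ennreal \<rho>"
    moreover have "edist_set x (S j ` A) \<le> dR (norm x + 1) (S j ` A) Ahat"
      using assms(1) by (intro edist_set_le_dR_right) auto
    moreover have "S j ` A \<noteq> {}" using base_in by blast
    ultimately have "ennreal (infdist x (S j ` A)) < ennreal \<rho>"
      by (simp add: edist_set_def)
    then show "infdist x (S j ` A) < \<rho>" by (simp add: ennreal_less_iff[OF infdist_nonneg])
  qed
qed

lemma eventually_graph_point_near:
  assumes x: "x \<in> Ahat" and \<rho>: "\<rho> > 0"
  shows "eventually (\<lambda>j. \<exists>y\<in>A. norm (S j y - x) < \<rho> \<and> norm (F j y - fhat x) < \<rho>) sequentially"
proof -
  have "\<exists>y\<in>A. dist x (S j y) < infdist x (S j ` A) + 1 / Suc j" for j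
  proof -
    have "infdist x (S j ` A) < infdist x (S j ` A) + 1 / Suc j" by simp
    then show ?thesis using infdist_lessD[of x "S j ` A"] base_in by blast
  qed
  then obtain ys where ys: "\<And>j. ys j \<in> A" "\<And>j. dist x (S j (ys j)) < infdist x (S j ` A) + 1 / Suc j"
    by metis
  have conv: "(\<lambda>j. S j (ys j)) \<longlonglongrightarrow> x"
    unfolding tendsto_iff
  proof (intro allI impI)
    fix e :: real assume e: "e > 0"
    have "eventually (\<lambda>j. infdist x (S j ` A) < e/2) sequentially"
      using eventually_infdist_less[OF x, of "e/2"] e by simp
    moreover have "eventually (\<lambda>j. 1 / real (Suc j) < e/2) sequentially"
      using LIMSEQ_inverse_real_of_nat e by (intro order_tendstoD(2)) (auto simp: inverse_eq_divide)
    ultimately show "eventually (\<lambda>j. dist (S j (ys j)) x < e) sequentially"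
    proof (rule eventually_elim2)
      fix j assume "infdist x (S j ` A) < e/2" "1 / real (Suc j) < e/2"
      then show "dist (S j (ys j)) x < e" using ys(2)[of j] by (simp add: dist_commute)
    qed
  qed
  have "(\<lambda>j. F j (ys j)) \<longlonglongrightarrow> fhat x"
    using values_converge[of ys x] ys(1) x conv by (simp add: S_def[abs_def] F_def[abs_def])
  then have "eventually (\<lambda>j. dist (F j (ys j)) (fhat x) < \<rho>) sequentially"
    using \<rho> by (simp add: tendsto_iff)
  moreover have "eventually (\<lambda>j. dist (S j (ys j)) x < \<rho>) sequentially"
    using conv \<rho> by (simp add: tendsto_iff)
  ultimately show ?thesis
    by (rule eventually_elim2) (use ys(1) in \<open>auto simp: dist_norm\<close>)
qed

lemma lipschitz_on_tangent_map: "L-lipschitz_on Ahat fhat"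
proof (rule lipschitz_onI[OF _ lipschitz_const_nonneg])
  fix x x' assume x: "x \<in> Ahat" and x': "x' \<in> Ahat"
  show "dist (fhat x) (fhat x') \<le> L * dist x x'"
    unfolding dist_norm
  proof (rule field_le_epsilon)
    fix e :: real assume e: "e > 0"
    define \<rho> where "\<rho> = e / (2 + 2 * L)"
    have \<rho>: "\<rho> > 0" "(2 + 2 * L) * \<rho> = e" using e lipschitz_const_nonneg by (auto simp: \<rho>_def)
    obtain j where "(\<exists>y\<in>A. norm (S j y - x) < \<rho> \<and> norm (F j y - fhat x) < \<rho>) \<and>
        (\<exists>y\<in>A. norm (S j y - x') < \<rho> \<and> norm (F j y - fhat x') < \<rho>)"
      using eventually_happens'[OF sequentially_bot
          eventually_conj[OF eventually_graph_point_near[OF x \<rho>(1)] eventually_graph_point_near[OF x' \<rho>(1)]]]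
      by blast
    then obtain y y' where y: "y \<in> A" "norm (S j y - x) < \<rho>" "norm (F j y - fhat x) < \<rho>"
      and y': "y' \<in> A" "norm (S j y' - x') < \<rho>" "norm (F j y' - fhat x') < \<rho>" by blast
    have "norm (S j y - S j y') \<le> norm (S j y - x) + norm (x - x') + norm (x' - S j y')"
      by (rule norm_le_sum3) simp
    also have "\<dots> \<le> norm (x - x') + 2 * \<rho>" using y y' by (simp add: norm_minus_commute)
    finally have sy: "norm (S j y - S j y') \<le> norm (x - x') + 2 * \<rho>" .
    have "norm (fhat x - fhat x') \<le> norm (fhat x - F j y) + norm (F j y - F j y') + norm (F j y' - fhat x')"
      by (rule norm_le_sum3) simp
    also have "norm (F j y - F j y') \<le> L * norm (S j y - S j y')" by (rule norm_F_diff_le[OF y(1) y'(1)])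
    also have "\<dots> \<le> L * (norm (x - x') + 2 * \<rho>)" using sy lipschitz_const_nonneg by (rule mult_left_mono)
    finally have "norm (fhat x - fhat x') \<le> L * norm (x - x') + (2 + 2 * L) * \<rho>"
      using y y' by (simp add: norm_minus_commute algebra_simps)
    then show "norm (fhat x - fhat x') \<le> L * norm (x - x') + e" using \<rho> by simp
  qed
qed

lemma eventually_rescaled_graph_near_tangent:
  assumes R1: "0 \<le> R1" and \<sigma>: "\<sigma> > 0"
  shows "eventually (\<lambda>j. \<forall>x\<in>A. norm (S j x) \<le> R1 \<longrightarrow>
           (\<exists>z\<in>Ahat. norm (S j x - z) < \<sigma> \<and> norm (F j x - fhat z) < \<sigma>)) sequentially"
proof -
  note L0 = lipschitz_const_nonneg
  define \<rho> where "\<rho> = \<sigma> / (8 * (L + 1))"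
  have "8 * (L + 1) * \<rho> = \<sigma>" using L0 by (simp add: \<rho>_def)
  moreover have "L * \<rho> \<ge> 0" "\<rho> > 0" using L0 \<sigma> by (simp_all add: \<rho>_def)
  ultimately have \<rho>: "\<rho> > 0" "2 * \<rho> < \<sigma>" "L * (3 * \<rho>) + \<rho> < \<sigma>"
    by (auto simp: algebra_simps)
  define K where "K = Ahat \<inter> cball 0 (R1 + \<rho>)"
  have "compact K" unfolding K_def using closed_tangent_set by (intro closed_Int_compact) auto
  then obtain N where N: "finite N" "N \<subseteq> K" "K \<subseteq> (\<Union>z\<in>N. ball z \<rho>)"
    using compactE_image[of K K "\<lambda>z. ball z \<rho>"] \<rho>(1) by force
  have NA: "z \<in> Ahat" if "z \<in> N" for z using N(2) that unfolding K_def by blast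
  have "eventually (\<lambda>j. \<forall>z\<in>N. \<exists>y\<in>A. norm (S j y - z) < \<rho> \<and> norm (F j y - fhat z) < \<rho>) sequentially"
    using N(1) by (intro eventually_ball_finite ballI eventually_graph_point_near NA \<rho>(1))
  moreover have "eventually (\<lambda>j. dR (R1 + 1) (S j ` A) Ahat < ennreal \<rho>) sequentially"
    using R1 \<rho> by (intro eventually_dR_less) auto
  ultimately show ?thesis
  proof (rule eventually_elim2)
    fix j
    assume near_N: "\<forall>z\<in>N. \<exists>y\<in>A. norm (S j y - z) < \<rho> \<and> norm (F j y - fhat z) < \<rho>"
      and dR_small: "dR (R1 + 1) (S j ` A) Ahat < ennreal \<rho>"
    show "\<forall>x\<in>A. norm (S j x) \<le> R1 \<longrightarrow> (\<exists>z\<in>Ahat. norm (S j x - z) < \<sigma> \<and> norm (F j x - fhat z) < \<sigma>)"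
    proof (intro ballI impI)
      fix x assume xA: "x \<in> A" and nx: "norm (S j x) \<le> R1"
      have "edist_set (S j x) Ahat < ennreal \<rho>"
        using edist_set_le_dR_left[of "S j x" "S j ` A" "R1 + 1" Ahat] xA nx dR_small by simp
      then obtain xh where xh: "xh \<in> Ahat" "norm (S j x - xh) < \<rho>"
        using edist_set_lessD by (fastforce simp: dist_norm)
      have "norm xh \<le> norm (S j x) + norm (xh - S j x)" by (rule norm_le_sum2) simp
      then have "xh \<in> K" using xh nx by (simp add: K_def norm_minus_commute)
      then obtain z where z: "z \<in> N" "norm (xh - z) < \<rho>"
        using N(3) by (auto simp: dist_norm norm_minus_commute)
      obtain y where y: "y \<in> A" "norm (S j y - z) < \<rho>" "norm (F j y - fhat z) < \<rho>"
        using near_N z(1) by blast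
      have "norm (S j x - z) \<le> norm (S j x - xh) + norm (xh - z)" by (rule norm_le_sum2) simp
      then have close: "norm (S j x - z) < \<sigma>" using xh z \<rho>(2) by linarith
      have "norm (S j x - S j y) \<le> norm (S j x - xh) + norm (xh - z) + norm (z - S j y)"
        by (rule norm_le_sum3) simp
      then have "norm (S j x - S j y) \<le> 3 * \<rho>" using xh z y(2) by (simp add: norm_minus_commute)
      then have "L * norm (S j x - S j y) \<le> L * (3 * \<rho>)" using L0 by (rule mult_left_mono)
      moreover have "norm (F j x - fhat z) \<le> norm (F j x - F j y) + norm (F j y - fhat z)"
        by (rule norm_le_sum2) simp
      moreover have "norm (F j x - F j y) \<le> L * norm (S j x - S j y)" by (rule norm_F_diff_le[OF xA y(1)])
      ultimately have "norm (F j x - fhat z) < \<sigma>" using y(3) \<rho>(3) by linarith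
      then show "\<exists>z\<in>Ahat. norm (S j x - z) < \<sigma> \<and> norm (F j x - fhat z) < \<sigma>"
        using close NA[OF z(1)] by blast
    qed
  qed
qed

lemma scaled_graph_near_if_close:
  assumes bA: "b \<in> Ahat" and net: "shifted_graph_net fhat Ahat b D (e/8) (R + 1)"
    and e: "e \<le> 1" and R: "0 \<le> R" and \<eta>: "0 < \<eta>" "16 * (L + 1) * \<eta> \<le> e"
    and upper: "\<forall>x\<in>A. norm (S j x) \<le> norm b + R + 2 \<longrightarrow>
                  (\<exists>u\<in>Ahat. norm (S j x - u) < \<eta> \<and> norm (F j x - fhat u) < \<eta>)"
    and lower: "\<forall>qv\<in>D. \<exists>u\<in>Ahat. norm (u - b - fst qv) < e/8 \<and> norm (fhat u - fhat b - snd qv) < e/8 \<and>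
                  (\<exists>x\<in>A. norm (S j x - u) < \<eta> \<and> norm (F j x - fhat u) < \<eta>)"
    and z: "z \<in> A" "norm (S j z - b) < \<eta>"
  shows "scaled_graph_near A f z (lam j) D e R"
proof -
  note L0 = lipschitz_const_nonneg
  have "0 \<le> L * \<eta>" using L0 \<eta>(1) by simp
  moreover have "16 * (L + 1) * \<eta> = 16 * (L * \<eta>) + 16 * \<eta>" by (simp add: algebra_simps)
  ultimately have \<eta>1: "16 * \<eta> \<le> e" and \<eta>2: "L * (2 * \<eta>) \<le> e / 8" using \<eta> by auto
  have l: "lam j > 0" by (rule lam_pos)
  have "norm (S j z) \<le> norm b + norm (S j z - b)" by (rule norm_le_sum2) simp
  then have "norm (S j z) \<le> norm b + R + 2" using z(2) \<eta>1 e R by linarith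
  then obtain zh where zh: "zh \<in> Ahat" "norm (S j z - zh) < \<eta>" "norm (F j z - fhat zh) < \<eta>"
    using upper z(1) by blast
  have "norm (zh - b) \<le> norm (zh - S j z) + norm (S j z - b)" by (rule norm_le_sum2) simp
  then have "norm (zh - b) < 2 * \<eta>" using zh(2) z(2) by (simp add: norm_minus_commute)
  then have "L * norm (zh - b) \<le> L * (2 * \<eta>)" using L0 by (intro mult_left_mono) auto
  then have fb: "norm (fhat zh - fhat b) \<le> e / 8"
    using lipschitz_onD[OF lipschitz_on_tangent_map zh(1) bA] \<eta>2 by (simp add: dist_norm)
  have "norm (F j z - fhat b) \<le> norm (F j z - fhat zh) + norm (fhat zh - fhat b)"
    by (rule norm_le_sum2) simp
  then have Fz: "norm (F j z - fhat b) < \<eta> + e/8" using zh(3) fb by linarith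
  have est: "norm (S j x - S j z - q) < e - e/8 \<and> norm (F j x - F j z - v) < e - e/8"
    if "norm (S j x - u) < \<eta>" "norm (F j x - fhat u) < \<eta>"
       "norm (u - b - q) < e/8" "norm (fhat u - fhat b - v) < e/8" for x u q v
    using norm_diff_diff_less[OF that(1) z(2) that(3)] norm_diff_diff_less[OF that(2) Fz that(4)] \<eta>1 \<eta>(1)
    by linarith
  show ?thesis
    unfolding scaled_graph_near_def
  proof (intro exI[of _ "e/8"] conjI ballI impI)
    show "e/8 > 0" using \<eta>1 \<eta> by simp
  next
    fix x assume xA: "x \<in> A" and nx: "norm (x - z) \<le> (R + e/8) * lam j"
    have nsw: "norm (S j x - S j z) \<le> R + e/8"
      using nx l by (simp add: S_diff pos_divide_le_eq)
    have "norm (S j x) \<le> norm (S j x - S j z) + norm (S j z - b) + norm b" by (rule norm_le_sum3) simp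
    then have "norm (S j x) \<le> norm b + R + 2" using nsw z(2) \<eta>1 e by linarith
    then obtain u where u: "u \<in> Ahat" "norm (S j x - u) < \<eta>" "norm (F j x - fhat u) < \<eta>"
      using upper xA by blast
    have "norm (u - b) \<le> norm (u - S j x) + norm (S j x - S j z) + norm (S j z - b)"
      by (rule norm_le_sum3) simp
    then have "norm (u - b) \<le> R + 1" using u(2) nsw z(2) \<eta>1 e by (simp add: norm_minus_commute)
    then obtain qv where qv: "qv \<in> D" "norm (u - b - fst qv) < e/8" "norm (fhat u - fhat b - snd qv) < e/8"
      using net u(1) by (auto simp: shifted_graph_net_def)
    show "\<exists>qv\<in>D. norm ((1 / lam j) *\<^sub>R (x - z) - fst qv) < e - e/8 \<and>
        norm ((1 / lam j) *\<^sub>R (f x - f z) - snd qv) < e - e/8"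
      using est[OF u(2,3) qv(2,3)] qv(1) by (auto simp: S_diff F_diff)
  next
    fix qv assume "qv \<in> D"
    then obtain u x where "norm (u - b - fst qv) < e/8" "norm (fhat u - fhat b - snd qv) < e/8"
      and x: "x \<in> A" "norm (S j x - u) < \<eta>" "norm (F j x - fhat u) < \<eta>"
      using lower by blast
    then show "\<exists>x\<in>A. norm ((1 / lam j) *\<^sub>R (x - z) - fst qv) < e - e/8 \<and>
        norm ((1 / lam j) *\<^sub>R (f x - f z) - snd qv) < e - e/8"
      using est[OF x(2,3)] by (auto simp: S_diff F_diff)
  qed
qed

lemma eventually_scaled_graph_near_if_close:
  assumes bA: "b \<in> Ahat" and net: "shifted_graph_net fhat Ahat b D (e/8) (R + 1)"
    and e: "0 < e" "e \<le> 1" and R: "0 \<le> R"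
  obtains \<eta> where "\<eta> > 0"
    "eventually (\<lambda>j. \<forall>z\<in>A. norm (S j z - b) < \<eta> \<longrightarrow> scaled_graph_near A f z (lam j) D e R) sequentially"
proof -
  define \<eta> where "\<eta> = e / (16 * (L + 1))"
  have \<eta>: "0 < \<eta>" "16 * (L + 1) * \<eta> \<le> e"
    using e lipschitz_const_nonneg by (auto simp: \<eta>_def)
  have "eventually (\<lambda>j. \<forall>x\<in>A. norm (S j x) \<le> norm b + R + 2 \<longrightarrow>
           (\<exists>u\<in>Ahat. norm (S j x - u) < \<eta> \<and> norm (F j x - fhat u) < \<eta>)) sequentially"
    using R \<eta> by (intro eventually_rescaled_graph_near_tangent) auto
  moreover have "eventually (\<lambda>j. \<forall>qv\<in>D. \<exists>u\<in>Ahat. norm (u - b - fst qv) < e/8 \<and>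
      norm (fhat u - fhat b - snd qv) < e/8 \<and> (\<exists>x\<in>A. norm (S j x - u) < \<eta> \<and> norm (F j x - fhat u) < \<eta>))
      sequentially"
  proof (intro eventually_ball_finite ballI)
    show "finite D" using net by (simp add: shifted_graph_net_def)
  next
    fix qv assume "qv \<in> D"
    then obtain u where u: "u \<in> Ahat" "norm (u - b - fst qv) < e/8" "norm (fhat u - fhat b - snd qv) < e/8"
      using net by (auto simp: shifted_graph_net_def)
    show "eventually (\<lambda>j. \<exists>u\<in>Ahat. norm (u - b - fst qv) < e/8 \<and> norm (fhat u - fhat b - snd qv) < e/8 \<and>
        (\<exists>x\<in>A. norm (S j x - u) < \<eta> \<and> norm (F j x - fhat u) < \<eta>)) sequentially"
      using eventually_graph_point_near[OF u(1) \<eta>(1)] by (rule eventually_mono) (use u in blast)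
  qed
  ultimately have "eventually (\<lambda>j. \<forall>z\<in>A. norm (S j z - b) < \<eta> \<longrightarrow> scaled_graph_near A f z (lam j) D e R)
      sequentially"
    by (rule eventually_elim2) (use scaled_graph_near_if_close[OF bA net e(2) R \<eta>] in blast)
  with \<eta>(1) show ?thesis by (rule that)
qed

lemma scaled_graph_near_at_small_scale:
  assumes bA: "b \<in> Ahat" and net: "shifted_graph_net fhat Ahat b D (e/8) (R + 1)"
    and e: "0 < e" "e \<le> 1" and R: "0 \<le> R" and \<delta>0: "\<delta>0 > 0"
    and nonporous: "\<And>h::nat. a \<in> graph_far_set A f D e R \<delta>0 \<Longrightarrow>
        nonporous_at A (graph_far_set A f D e R \<delta>0) (1 / Suc h) a"
  shows "\<exists>r. 0 < r \<and> r < \<delta>0 \<and> scaled_graph_near A f a r D e R"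
proof (rule ccontr)
  assume not_near: "\<not> (\<exists>r. 0 < r \<and> r < \<delta>0 \<and> scaled_graph_near A f a r D e R)"
  define E where "E = graph_far_set A f D e R \<delta>0"
  have "a \<in> E" using not_near base_in by (auto simp: E_def graph_far_set_def)
  obtain \<eta> where \<eta>: "\<eta> > 0" and near_close:
      "eventually (\<lambda>j. \<forall>z\<in>A. norm (S j z - b) < \<eta> \<longrightarrow> scaled_graph_near A f z (lam j) D e R) sequentially"
    by (rule eventually_scaled_graph_near_if_close[OF bA net e R])
  define \<rho> where "\<rho> = norm b + 1"
  have \<rho>: "\<rho> > 0" by (simp add: \<rho>_def add_nonneg_pos)
  obtain h :: nat where "1 / real (Suc h) < \<eta> / (2 * \<rho>)"
    using \<eta> \<rho> by (metis divide_pos_pos nat_approx_posE zero_less_mult_iff zero_less_numeral)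
  then have h: "(1 / Suc h) * \<rho> < \<eta> / 2" using \<rho> by (simp add: field_simps)
  obtain \<delta> where \<delta>: "\<delta> > 0"
    and porous_free: "\<forall>r. 0 < r \<longrightarrow> r < \<delta> \<longrightarrow> (\<forall>y\<in>A. dist y a < r \<longrightarrow> ball y ((1 / Suc h) * r) \<inter> E \<noteq> {})"
    using nonporous[of h] \<open>a \<in> E\<close> unfolding E_def nonporous_at_def by blast
  have "eventually (\<lambda>j. lam j < min \<delta>0 (\<delta> / \<rho>)) sequentially"
    using lam_tendsto_0 \<delta>0 \<delta> \<rho> by (intro order_tendstoD(2)) auto
  moreover have "eventually (\<lambda>j. \<exists>y\<in>A. norm (S j y - b) < min 1 (\<eta>/2)) sequentially"
    using eventually_graph_point_near[OF bA, of "min 1 (\<eta>/2)"] \<eta> by (auto elim: eventually_mono)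
  ultimately have "eventually (\<lambda>j. lam j < min \<delta>0 (\<delta> / \<rho>) \<and> (\<exists>y\<in>A. norm (S j y - b) < min 1 (\<eta>/2)) \<and>
      (\<forall>z\<in>A. norm (S j z - b) < \<eta> \<longrightarrow> scaled_graph_near A f z (lam j) D e R)) sequentially"
    using near_close by (intro eventually_conj)
  then obtain j where "lam j < min \<delta>0 (\<delta> / \<rho>)" and y: "\<exists>y\<in>A. norm (S j y - b) < min 1 (\<eta>/2)"
      and near_j: "\<forall>z\<in>A. norm (S j z - b) < \<eta> \<longrightarrow> scaled_graph_near A f z (lam j) D e R"
    using eventually_happens'[OF sequentially_bot] by blast
  then have j: "lam j < \<delta>0" "lam j < \<delta> / \<rho>" by simp_all
  have l: "lam j > 0" by (rule lam_pos)
  from y obtain y where y: "y \<in> A" "norm (S j y - b) < min 1 (\<eta>/2)" by blast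
  define r where "r = \<rho> * lam j"
  have r: "0 < r" "r < \<delta>" using j(2) l \<rho> by (auto simp: r_def field_simps)
  have "norm (S j y) \<le> norm b + norm (S j y - b)" by (rule norm_le_sum2) simp
  then have "norm (y - a) / lam j < \<rho>" using y(2) by (simp add: \<rho>_def norm_S)
  then have "dist y a < r" using l by (simp add: r_def dist_norm field_simps)
  then have "ball y ((1 / Suc h) * r) \<inter> E \<noteq> {}" using porous_free r y(1) by blast
  then obtain z where z: "z \<in> E" "dist y z < (1 / Suc h) * r" by auto
  have "norm (S j z - S j y) = norm (z - y) / lam j" using l by (simp add: S_diff)
  also have "\<dots> < (1 / Suc h) * r / lam j"
    using z(2) l by (intro divide_strict_right_mono) (simp_all add: dist_norm norm_minus_commute)
  also have "\<dots> = (1 / Suc h) * \<rho>" using l by (simp add: r_def)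
  finally have "norm (S j z - S j y) < \<eta> / 2" using h by linarith
  moreover have "norm (S j z - b) \<le> norm (S j z - S j y) + norm (S j y - b)" by (rule norm_le_sum2) simp
  ultimately have "norm (S j z - b) < \<eta>" using y(2) by linarith
  moreover have "z \<in> A" using z(1) by (simp add: E_def graph_far_set_def)
  ultimately have "scaled_graph_near A f z (lam j) D e R" using near_j by blast
  then show False using z(1) j(1) l by (auto simp: E_def graph_far_set_def)
qed

end

section \<open>Translated tangents from approximating scales\<close>

lemma dR_scaled_shifted_le:
  assumes near: "scaled_graph_near A f a r D \<epsilon> R'"
    and net: "shifted_graph_net fhat Ahat b D (\<epsilon>/8) (R' + 1)" and R: "R \<le> R'" and r: "r > 0"
  shows "dR R ((\<lambda>y. (1 / r) *\<^sub>R (y - a)) ` A) ((\<lambda>x. x - b) ` Ahat) \<le> ennreal (2 * \<epsilon>)"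
proof -
  obtain \<theta> where \<theta>: "\<theta> > 0"
    and near1: "\<forall>x\<in>A. norm (x - a) \<le> (R' + \<theta>) * r \<longrightarrow>
        (\<exists>qv\<in>D. norm ((1/r) *\<^sub>R (x - a) - fst qv) < \<epsilon> - \<theta> \<and> norm ((1/r) *\<^sub>R (f x - f a) - snd qv) < \<epsilon> - \<theta>)"
    and near2: "\<forall>qv\<in>D. \<exists>x\<in>A. norm ((1/r) *\<^sub>R (x - a) - fst qv) < \<epsilon> - \<theta> \<and>
        norm ((1/r) *\<^sub>R (f x - f a) - snd qv) < \<epsilon> - \<theta>"
    using near unfolding scaled_graph_near_def by blast
  show ?thesis
  proof (rule dR_leI)
    fix p assume "p \<in> (\<lambda>y. (1 / r) *\<^sub>R (y - a)) ` A" and np: "norm p < R"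
    then obtain x where x: "x \<in> A" "p = (1 / r) *\<^sub>R (x - a)" by blast
    have "norm (x - a) = r * norm p" using x(2) r by simp
    also have "\<dots> \<le> r * (R' + \<theta>)" using np R \<theta> r by (intro mult_left_mono) auto
    finally obtain qv where qv: "qv \<in> D" "norm (p - fst qv) < \<epsilon> - \<theta>"
      using near1 x by (auto simp: mult.commute)
    obtain u where u: "u \<in> Ahat" "norm (u - b - fst qv) < \<epsilon>/8"
      using net qv(1) by (auto simp: shifted_graph_net_def)
    have "dist p (u - b) \<le> norm (p - fst qv) + norm (u - b - fst qv)"
      using norm_le_sum2[of "p - (u - b)" "p - fst qv" "fst qv - (u - b)"] norm_minus_commute[of "fst qv" "u - b"]
      by (simp add: dist_norm)
    then have "dist p (u - b) \<le> 2 * \<epsilon>" using qv(2) u(2) \<theta> norm_ge_zero[of "u - b - fst qv"] by linarith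
    moreover have "edist_set p ((\<lambda>x. x - b) ` Ahat) \<le> ennreal (dist p (u - b))"
      using u(1) by (intro edist_set_le) auto
    ultimately show "edist_set p ((\<lambda>x. x - b) ` Ahat) \<le> ennreal (2 * \<epsilon>)"
      by (meson ennreal_leI order_trans)
  next
    fix x' assume "x' \<in> (\<lambda>x. x - b) ` Ahat" and nx: "norm x' < R"
    then obtain u where u: "u \<in> Ahat" "x' = u - b" by blast
    then obtain qv where qv: "qv \<in> D" "norm (u - b - fst qv) < \<epsilon>/8"
      using net nx R by (fastforce simp: shifted_graph_net_def)
    obtain x where x: "x \<in> A" "norm ((1/r) *\<^sub>R (x - a) - fst qv) < \<epsilon> - \<theta>"
      using near2 qv(1) by blast
    have "dist x' ((1/r) *\<^sub>R (x - a)) \<le> norm (u - b - fst qv) + norm ((1/r) *\<^sub>R (x - a) - fst qv)"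
      using norm_le_sum2[of "x' - (1/r) *\<^sub>R (x - a)" "u - b - fst qv" "fst qv - (1/r) *\<^sub>R (x - a)"] u(2)
        norm_minus_commute[of "fst qv" "(1/r) *\<^sub>R (x - a)"]
      by (simp add: dist_norm)
    then have "dist x' ((1/r) *\<^sub>R (x - a)) \<le> 2 * \<epsilon>"
      using qv(2) x(2) \<theta> norm_ge_zero[of "u - b - fst qv"] by linarith
    moreover have "edist_set x' ((\<lambda>y. (1 / r) *\<^sub>R (y - a)) ` A) \<le> ennreal (dist x' ((1/r) *\<^sub>R (x - a)))"
      using x(1) by (intro edist_set_le) auto
    ultimately show "edist_set x' ((\<lambda>y. (1 / r) *\<^sub>R (y - a)) ` A) \<le> ennreal (2 * \<epsilon>)"
      by (meson ennreal_leI order_trans)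
  qed
qed

lemma norm_scaled_value_diff_le:
  assumes lip: "L-lipschitz_on Ahat fhat" and r: "r > 0"
    and near: "scaled_graph_near A f a r D \<epsilon> R"
    and net: "shifted_graph_net fhat Ahat b D (\<epsilon>/8) (R + 1)"
    and x: "x \<in> A" "norm ((1/r) *\<^sub>R (x - a)) \<le> R" and u0: "u0 \<in> Ahat"
  shows "norm ((1/r) *\<^sub>R (f x - f a) - (fhat u0 - fhat b))
           \<le> (2 + 2 * L) * \<epsilon> + L * norm ((1/r) *\<^sub>R (x - a) - (u0 - b))"
proof -
  define p where "p = (1/r) *\<^sub>R (x - a)"
  define v where "v = (1/r) *\<^sub>R (f x - f a)"
  have L: "L \<ge> 0" using lip lipschitz_on_nonneg by blast
  obtain \<theta> where \<theta>: "\<theta> > 0"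
    and near1: "\<forall>x\<in>A. norm (x - a) \<le> (R + \<theta>) * r \<longrightarrow>
        (\<exists>qv\<in>D. norm ((1/r) *\<^sub>R (x - a) - fst qv) < \<epsilon> - \<theta> \<and> norm ((1/r) *\<^sub>R (f x - f a) - snd qv) < \<epsilon> - \<theta>)"
    using near unfolding scaled_graph_near_def by blast
  have "norm (x - a) = r * norm p" using r by (simp add: p_def)
  also have "\<dots> \<le> r * (R + \<theta>)" using x(2) \<theta> r by (intro mult_left_mono) (auto simp: p_def)
  finally obtain qv where qv: "qv \<in> D" "norm (p - fst qv) < \<epsilon>" "norm (v - snd qv) < \<epsilon>"
    using near1 x(1) \<theta> by (force simp: p_def v_def mult.commute)
  obtain u where u: "u \<in> Ahat" "norm (u - b - fst qv) < \<epsilon>/8" "norm (fhat u - fhat b - snd qv) < \<epsilon>/8"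
    using net qv(1) by (auto simp: shifted_graph_net_def)
  have "norm (u - u0) \<le> norm (u - b - fst qv) + norm (fst qv - p) + norm (p - (u0 - b))"
    by (rule norm_le_sum3) simp
  moreover have "norm (fst qv - p) = norm (p - fst qv)" by (rule norm_minus_commute)
  ultimately have "norm (u - u0) \<le> 2 * \<epsilon> + norm (p - (u0 - b))"
    using u(2) qv(2) norm_ge_zero[of "u - b - fst qv"] by linarith
  then have "L * norm (u - u0) \<le> L * (2 * \<epsilon> + norm (p - (u0 - b)))" using L by (rule mult_left_mono)
  moreover have "norm (fhat u - fhat u0) \<le> L * norm (u - u0)"
    using lipschitz_onD[OF lip u(1) u0] by (simp add: dist_norm)
  moreover have "norm (v - (fhat u0 - fhat b)) \<le>
      norm (v - snd qv) + norm (snd qv - (fhat u - fhat b)) + norm (fhat u - fhat u0)"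
    by (rule norm_le_sum3) simp
  moreover have "norm (snd qv - (fhat u - fhat b)) = norm (fhat u - fhat b - snd qv)"
    by (rule norm_minus_commute)
  moreover have "L * (2 * \<epsilon> + norm (p - (u0 - b))) = 2 * (L * \<epsilon>) + L * norm (p - (u0 - b))"
    "(2 + 2 * L) * \<epsilon> = 2 * \<epsilon> + 2 * (L * \<epsilon>)"
    by (simp_all add: algebra_simps)
  ultimately show ?thesis
    using qv(3) u(3) norm_ge_zero[of "fhat u - fhat b - snd qv"] unfolding p_def v_def by linarith
qed

lemma intrinsic_tangent_shift_of_scales:
  fixes A Ahat :: "'a::euclidean_space set" and f fhat :: "'a \<Rightarrow> 'b::euclidean_space"
  assumes "closed Ahat" and lip: "L-lipschitz_on Ahat fhat"
    and r: "\<And>k. 0 < r k" "\<And>k. r k < 1 / Suc k"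
    and near: "\<And>k. scaled_graph_near A f a (r k) (D k) (1 / Suc k) (real k)"
    and net: "\<And>k. shifted_graph_net fhat Ahat b (D k) (1 / Suc k / 8) (real k + 1)"
  shows "intrinsic_tangent A f a ((\<lambda>x. x - b) ` Ahat) (\<lambda>x. fhat (x + b) - fhat b)"
proof -
  have inv: "(\<lambda>k. 1 / real (Suc k)) \<longlonglongrightarrow> 0"
    using LIMSEQ_inverse_real_of_nat by (simp add: inverse_eq_divide)
  have large: "eventually (\<lambda>k. c \<le> real k) sequentially" for c
    using filterlim_real_sequentially by (simp add: filterlim_at_top)
  show ?thesis
    unfolding intrinsic_tangent_def
  proof (intro exI[of _ r] conjI allI impI)
    show "0 < r k" for k by (rule r(1))
    show "r \<longlonglongrightarrow> 0"
      by (rule tendsto_sandwich[OF _ _ tendsto_const inv]) (use r in \<open>auto intro: less_imp_le always_eventually\<close>)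
    show "pointed_hausdorff_conv (\<lambda>k. (\<lambda>y. (1 / r k) *\<^sub>R (y - a)) ` A) ((\<lambda>x. x - b) ` Ahat)"
      unfolding pointed_hausdorff_conv_def
    proof (intro conjI allI impI)
      show "closed ((\<lambda>x. x - b) ` Ahat)" using \<open>closed Ahat\<close> by (rule closed_translation_subtract)
      fix R :: real
      show "(\<lambda>k. dR R ((\<lambda>y. (1 / r k) *\<^sub>R (y - a)) ` A) ((\<lambda>x. x - b) ` Ahat)) \<longlonglongrightarrow> 0"
      proof (rule tendsto_sandwich[OF _ _ tendsto_const])
        show "eventually (\<lambda>k. dR R ((\<lambda>y. (1 / r k) *\<^sub>R (y - a)) ` A) ((\<lambda>x. x - b) ` Ahat)
            \<le> ennreal (2 * (1 / real (Suc k)))) sequentially"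
          using large[of R] by (rule eventually_mono) (use dR_scaled_shifted_le[OF near net _ r(1)] in simp)
        have "(\<lambda>k. ennreal (2 * (1 / real (Suc k)))) \<longlonglongrightarrow> ennreal (2 * 0)"
          by (intro tendsto_ennrealI tendsto_mult tendsto_const inv)
        then show "(\<lambda>k. ennreal (2 * (1 / real (Suc k)))) \<longlonglongrightarrow> 0" by simp
      qed simp
    qed
  next
    fix xs x' assume xs: "\<forall>k. xs k \<in> A" and "x' \<in> (\<lambda>x. x - b) ` Ahat"
      and conv: "(\<lambda>k. (1 / r k) *\<^sub>R (xs k - a)) \<longlonglongrightarrow> x'"
    then obtain u0 where u0: "u0 \<in> Ahat" "x' = u0 - b" by blast
    have "eventually (\<lambda>k. dist ((1 / r k) *\<^sub>R (xs k - a)) x' < 1) sequentially"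
      using conv by (simp add: tendsto_iff)
    then have "eventually (\<lambda>k. norm ((1 / r k) *\<^sub>R (f (xs k) - f a) - (fhat u0 - fhat b))
        \<le> (2 + 2 * L) * (1 / real (Suc k)) + L * norm ((1 / r k) *\<^sub>R (xs k - a) - x')) sequentially"
      using large[of "norm x' + 1"]
    proof eventually_elim
      case (elim k)
      then have "norm ((1 / r k) *\<^sub>R (xs k - a)) \<le> real k"
        using norm_triangle_sub[of "(1 / r k) *\<^sub>R (xs k - a)" x'] by (simp add: dist_norm)
      then show ?case
        using norm_scaled_value_diff_le[OF lip r(1) near net] xs u0 by simp
    qed
    moreover have "(\<lambda>k. (2 + 2 * L) * (1 / real (Suc k)) + L * norm ((1 / r k) *\<^sub>R (xs k - a) - x')) \<longlonglongrightarrow> 0"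
      using conv by (intro tendsto_add_zero tendsto_mult_right_zero inv tendsto_norm_zero LIM_zero)
    ultimately have "(\<lambda>k. (1 / r k) *\<^sub>R (f (xs k) - f a) - (fhat u0 - fhat b)) \<longlonglongrightarrow> 0"
      by (rule Lim_null_comparison)
    then show "(\<lambda>k. (1 / r k) *\<^sub>R (f (xs k) - f a)) \<longlonglongrightarrow> fhat (x' + b) - fhat b"
      using u0(2) by (simp add: LIM_zero_iff)
  qed
qed

lemma intrinsic_tangent_shift:
  fixes A :: "'a::euclidean_space set" and f :: "'a \<Rightarrow> 'b::euclidean_space"
  assumes "a \<in> A" and lip: "L-lipschitz_on A f"
    and tan: "intrinsic_tangent A f a Ahat fhat" and bA: "b \<in> Ahat"
    and Q: "\<And>X. open X \<Longrightarrow> X \<noteq> {} \<Longrightarrow> \<exists>d\<in>Q. d \<in> X"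
    and nonporous: "\<forall>D\<in>{D. finite D \<and> D \<subseteq> Q}. \<forall>k h. a \<in> graph_far_set A f D (1 / Suc k) (real k) (1 / Suc k) \<longrightarrow>
       nonporous_at A (graph_far_set A f D (1 / Suc k) (real k) (1 / Suc k)) (1 / Suc h) a"
  shows "intrinsic_tangent A f a ((\<lambda>x. x - b) ` Ahat) (\<lambda>x. fhat (x + b) - fhat b)"
proof -
  obtain lam where lam: "\<forall>j. lam j > 0" "lam \<longlonglongrightarrow> 0"
      "pointed_hausdorff_conv (\<lambda>j. (\<lambda>y. (1 / lam j) *\<^sub>R (y - a)) ` A) Ahat"
      "\<forall>xs x. (\<forall>j. xs j \<in> A) \<longrightarrow> x \<in> Ahat \<longrightarrow> (\<lambda>j. (1 / lam j) *\<^sub>R (xs j - a)) \<longlonglongrightarrow> x \<longrightarrow>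
          (\<lambda>j. (1 / lam j) *\<^sub>R (f (xs j) - f a)) \<longlonglongrightarrow> fhat x"
    using tan unfolding intrinsic_tangent_def by blast
  interpret tangent_sequence A f a L lam Ahat fhat
    using \<open>a \<in> A\<close> lip lam by unfold_locales auto
  have "\<exists>D r. shifted_graph_net fhat Ahat b D (1 / Suc k / 8) (real k + 1) \<and>
      0 < r \<and> r < 1 / Suc k \<and> scaled_graph_near A f a r D (1 / Suc k) (real k)" for k :: nat
  proof -
    have "(0::real) < 1 / Suc k / 8" by simp
    from shifted_graph_net_exists[OF closed_tangent_set lipschitz_on_tangent_map this Q]
    obtain D where D: "D \<subseteq> Q" "shifted_graph_net fhat Ahat b D (1 / Suc k / 8) (real k + 1)"
      by blast
    have "finite D" using D(2) by (simp add: shifted_graph_net_def)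
    have "\<exists>r. 0 < r \<and> r < 1 / Suc k \<and> scaled_graph_near A f a r D (1 / Suc k) (real k)"
      by (rule scaled_graph_near_at_small_scale[OF bA D(2)])
        (use nonporous[rule_format, of D k] \<open>finite D\<close> D(1) in simp_all)
    with D(2) show ?thesis by blast
  qed
  then obtain D r where Dr: "\<And>k. shifted_graph_net fhat Ahat b (D k) (1 / Suc k / 8) (real k + 1) \<and>
      0 < r k \<and> r k < 1 / Suc k \<and> scaled_graph_near A f a (r k) (D k) (1 / Suc k) (real k)"
    by metis
  show ?thesis
    by (rule intrinsic_tangent_shift_of_scales[OF closed_tangent_set lipschitz_on_tangent_map, where r = r and D = D])
      (use Dr in blast)+
qed

lemma AE_nonporous_graph_far_sets:
  fixes A :: "'a::euclidean_space set" and f :: "'a \<Rightarrow> 'b::real_normed_vector"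
  assumes "closed A" "doubling_measure_on A \<mu>" "L-lipschitz_on A f" "countable Q"
  shows "AE a in \<mu>. \<forall>D\<in>{D. finite D \<and> D \<subseteq> Q}. \<forall>k h.
           a \<in> graph_far_set A f D (1 / Suc k) (real k) (1 / Suc k) \<longrightarrow>
           nonporous_at A (graph_far_set A f D (1 / Suc k) (real k) (1 / Suc k)) (1 / Suc h) a"
proof (intro AE_ball_countable' countable_Collect_finite_subset[OF assms(4)])
  fix D
  show "AE a in \<mu>. \<forall>k h. a \<in> graph_far_set A f D (1 / Suc k) (real k) (1 / Suc k) \<longrightarrow>
      nonporous_at A (graph_far_set A f D (1 / Suc k) (real k) (1 / Suc k)) (1 / Suc h) a"
    unfolding AE_all_countable
    by (intro allI AE_nonporous[OF assms(2) closed_graph_far_set[OF assms(1,3)]])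
      (auto simp: graph_far_set_def)
qed

theorem proposition2p5:
  fixes A :: "(real ^ 'n) set" and f :: "real ^ 'n \<Rightarrow> real ^ 'm" and \<mu> :: "(real ^ 'n) measure"
  assumes "closed A"
    and "doubling_measure_on A \<mu>"
    and "\<exists>L. L-lipschitz_on A f"
  shows "AE a in \<mu>. a \<in> A \<longrightarrow>
           (\<forall>Ahat fhat. intrinsic_tangent A f a Ahat fhat \<longrightarrow>
              (\<forall>b\<in>Ahat. intrinsic_tangent A f a ((\<lambda>x. x - b) ` Ahat) (\<lambda>x. fhat (x + b) - fhat b)))"
proof -
  obtain L where lip: "L-lipschitz_on A f" using assms(3) by blast
  obtain Q :: "((real ^ 'n) \<times> (real ^ 'm)) set"
    where Q: "countable Q" "\<And>X. open X \<Longrightarrow> X \<noteq> {} \<Longrightarrow> \<exists>d\<in>Q. d \<in> X"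
    using countable_dense_setE by blast
  from AE_nonporous_graph_far_sets[OF assms(1,2) lip Q(1)] show ?thesis
  proof (rule eventually_mono, intro impI allI ballI)
    fix a Ahat fhat b
    assume nonporous: "\<forall>D\<in>{D. finite D \<and> D \<subseteq> Q}. \<forall>k h.
        a \<in> graph_far_set A f D (1 / Suc k) (real k) (1 / Suc k) \<longrightarrow>
        nonporous_at A (graph_far_set A f D (1 / Suc k) (real k) (1 / Suc k)) (1 / Suc h) a"
      and tangent: "a \<in> A" "intrinsic_tangent A f a Ahat fhat" "b \<in> Ahat"
    show "intrinsic_tangent A f a ((\<lambda>x. x - b) ` Ahat) (\<lambda>x. fhat (x + b) - fhat b)"
      by (rule intrinsic_tangent_shift[OF tangent(1) lip tangent(2,3) Q(2) nonporous])
  qed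
qed

end
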